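(* For every quasiordered set $(A,\gamma)$, $$\mathrm{hsdim}(A,\gamma)\le\dim\bigl(A/(\gamma\cap\gamma^{-1}),r_\gamma\bigr).$$
   Context: A quasiorder on $A$ is a reflexive and transitive relation; $\Delta_A=\{(a,a)\mid a\in A\}$. A quasiorder $\alpha$ on $A$ is a half-space if there is a quasiorder $\beta$ on $A$ with $\alpha\cup\beta=A\times A$ and $\alpha\cap\beta=\Delta_A$. A half-space realizer of a quasiorder $\gamma$ on $A$ is a set $\{\alpha_i\mid i\in I\}$ of half-spaces on $A$ with $\bigcap_{i\in I}\alpha_i=\gamma$; the half-space dimension $\mathrm{hsdim}(A,\gamma)$ is the minimum cardinality of a half-space realizer of $\gamma$. For a quasiorder $\gamma$, $r_\gamma$ is the induced partial order on $A/(\gamma\cap\gamma^{-1})$: $([a],[b])\in r_\gamma$ iff $(a,b)\in\gamma$. For a partial order, $\dim$ denotes the order dimension: the least cardinality of a set of linear extensions whose intersection is the partial order. *)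

theory Defs
  imports Main
begin

definition quasiorder_on :: "'a set \<Rightarrow> 'a rel \<Rightarrow> bool" where
  "quasiorder_on A r \<longleftrightarrow> r \<subseteq> A \<times> A \<and> (\<forall>a\<in>A. (a, a) \<in> r) \<and> trans r"

definition half_space :: "'a set \<Rightarrow> 'a rel \<Rightarrow> bool" where
  "half_space A \<alpha> \<longleftrightarrow> quasiorder_on A \<alpha> \<and>
     (\<exists>\<beta>. quasiorder_on A \<beta> \<and> \<alpha> \<union> \<beta> = A \<times> A \<and> \<alpha> \<inter> \<beta> = Id_on A)"

text \<open>Intersection of a family of relations on A (empty family gives A x A).\<close>
definition hs_realizer :: "'a set \<Rightarrow> 'a rel \<Rightarrow> 'a rel set \<Rightarrow> bool" where
  "hs_realizer A \<gamma> H \<longleftrightarrow> (\<forall>\<alpha>\<in>H. half_space A \<alpha>) \<and> (A \<times> A) \<inter> \<Inter>H = \<gamma>"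

definition partial_order_on' :: "'a set \<Rightarrow> 'a rel \<Rightarrow> bool" where
  "partial_order_on' X r \<longleftrightarrow> quasiorder_on X r \<and> antisym r"

definition linear_order_on' :: "'a set \<Rightarrow> 'a rel \<Rightarrow> bool" where
  "linear_order_on' X r \<longleftrightarrow> partial_order_on' X r \<and> (\<forall>x\<in>X. \<forall>y\<in>X. (x, y) \<in> r \<or> (y, x) \<in> r)"

definition order_realizer :: "'a set \<Rightarrow> 'a rel \<Rightarrow> 'a rel set \<Rightarrow> bool" where
  "order_realizer X r L \<longleftrightarrow> (\<forall>l\<in>L. linear_order_on' X l \<and> r \<subseteq> l) \<and> (X \<times> X) \<inter> \<Inter>L = r"

definition qclasses :: "'a set \<Rightarrow> 'a rel \<Rightarrow> 'a set set" where
  "qclasses A \<gamma> = A // (\<gamma> \<inter> \<gamma>\<inverse>)"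

definition r_of :: "'a set \<Rightarrow> 'a rel \<Rightarrow> 'a set rel" where
  "r_of A \<gamma> = {(X, Y). X \<in> qclasses A \<gamma> \<and> Y \<in> qclasses A \<gamma> \<and>
       (\<exists>a\<in>X. \<exists>b\<in>Y. (a, b) \<in> \<gamma>)}"

end

theory Submission
  imports Defs
begin

text \<open>Pull every linear extension of \<open>r\<^sub>\<gamma>\<close> in a realizer back to \<open>A\<close> along the
  quotient map. Each pullback is a total quasiorder, and total quasiorders are half-spaces:
  the complementary quasiorder is the strict reverse relation together with the diagonal.
  Since \<open>r\<^sub>\<gamma>\<close> determines \<open>\<gamma>\<close>, the pullbacks intersect to \<open>\<gamma>\<close>, and there are no more
  of them than linear extensions.\<close>

lemma total_quasiorder_half_space:
  assumes qo: "quasiorder_on A \<alpha>"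
    and total: "\<forall>x\<in>A. \<forall>y\<in>A. (x, y) \<in> \<alpha> \<or> (y, x) \<in> \<alpha>"
  shows "half_space A \<alpha>"
proof -
  have sub: "\<alpha> \<subseteq> A \<times> A" and refl: "\<forall>a\<in>A. (a, a) \<in> \<alpha>" and tr: "trans \<alpha>"
    using qo unfolding quasiorder_on_def by auto
  define \<beta> where "\<beta> = (A \<times> A - \<alpha>) \<union> Id_on A"
  have "trans \<beta>"
  proof (rule transI)
    fix x y z assume xy: "(x, y) \<in> \<beta>" and yz: "(y, z) \<in> \<beta>"
    show "(x, z) \<in> \<beta>"
    proof (cases "x = y \<or> y = z")
      case True
      then show ?thesis using xy yz by auto
    next
      case False
      then have "x \<in> A" "y \<in> A" "z \<in> A" "(y, z) \<notin> \<alpha>" and xy': "(x, y) \<notin> \<alpha>"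
        using xy yz unfolding \<beta>_def by auto
      then have "(z, y) \<in> \<alpha>" using total by blast
      then have "(x, z) \<notin> \<alpha>" using xy' tr by (meson transD)
      then show ?thesis unfolding \<beta>_def using \<open>x \<in> A\<close> \<open>z \<in> A\<close> by blast
    qed
  qed
  then have "quasiorder_on A \<beta>"
    unfolding quasiorder_on_def \<beta>_def by auto
  moreover have "\<alpha> \<union> \<beta> = A \<times> A" and "\<alpha> \<inter> \<beta> = Id_on A"
    using sub refl unfolding \<beta>_def by auto
  ultimately show ?thesis
    unfolding half_space_def using qo by blast
qed

lemma linear_order_inv_image_half_space:
  assumes lin: "linear_order_on' X l" and f: "f ` A \<subseteq> X"
  shows "half_space A ((A \<times> A) \<inter> inv_image l f)"
proof (rule total_quasiorder_half_space)
  have "trans l" and "\<forall>x\<in>X. (x, x) \<in> l"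
    and total: "\<forall>x\<in>X. \<forall>y\<in>X. (x, y) \<in> l \<or> (y, x) \<in> l"
    using lin unfolding linear_order_on'_def partial_order_on'_def quasiorder_on_def by auto
  then show "quasiorder_on A ((A \<times> A) \<inter> inv_image l f)"
    using f unfolding quasiorder_on_def by (auto simp: trans_def)
  show "\<forall>x\<in>A. \<forall>y\<in>A. (x, y) \<in> (A \<times> A) \<inter> inv_image l f \<or> (y, x) \<in> (A \<times> A) \<inter> inv_image l f"
    using f total by auto
qed

lemma Int_Inter_inv_image:
  assumes "f ` A \<subseteq> X"
  shows "(A \<times> A) \<inter> \<Inter>((\<lambda>l. (A \<times> A) \<inter> inv_image l f) ` L) =
    (A \<times> A) \<inter> inv_image ((X \<times> X) \<inter> \<Inter>L) f"
  using assms by (auto simp: inv_image_def)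

definition qclass :: "'a rel \<Rightarrow> 'a \<Rightarrow> 'a set" where
  "qclass \<gamma> a = (\<gamma> \<inter> \<gamma>\<inverse>) `` {a}"

lemma qclass_in_qclasses: "a \<in> A \<Longrightarrow> qclass \<gamma> a \<in> qclasses A \<gamma>"
  unfolding qclass_def qclasses_def by (rule quotientI)

lemma quasiorder_eq_inv_image_r_of:
  assumes "quasiorder_on A \<gamma>"
  shows "\<gamma> = (A \<times> A) \<inter> inv_image (r_of A \<gamma>) (qclass \<gamma>)"
proof -
  have sub: "\<gamma> \<subseteq> A \<times> A" and refl: "\<forall>a\<in>A. (a, a) \<in> \<gamma>" and tr: "trans \<gamma>"
    using assms unfolding quasiorder_on_def by auto
  have "(qclass \<gamma> a, qclass \<gamma> b) \<in> r_of A \<gamma> \<longleftrightarrow> (a, b) \<in> \<gamma>" if "a \<in> A" "b \<in> A" for a b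
  proof
    assume "(qclass \<gamma> a, qclass \<gamma> b) \<in> r_of A \<gamma>"
    then obtain a' b' where "(a, a') \<in> \<gamma>" "(a', b') \<in> \<gamma>" "(b', b) \<in> \<gamma>"
      unfolding r_of_def qclass_def by blast
    then show "(a, b) \<in> \<gamma>" using tr by (meson transD)
  next
    assume "(a, b) \<in> \<gamma>"
    moreover have "a \<in> qclass \<gamma> a" "b \<in> qclass \<gamma> b"
      using that refl unfolding qclass_def by auto
    ultimately show "(qclass \<gamma> a, qclass \<gamma> b) \<in> r_of A \<gamma>"
      unfolding r_of_def using qclass_in_qclasses[OF that(1)] qclass_in_qclasses[OF that(2)]
      by blast
  qed
  then show ?thesis using sub by auto
qed

theorem corollary2p10:
  fixes A :: "'a set" and \<gamma> :: "'a rel"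
  assumes "quasiorder_on A \<gamma>"
  shows "\<forall>L. order_realizer (qclasses A \<gamma>) (r_of A \<gamma>) L \<longrightarrow>
           (\<exists>H. hs_realizer A \<gamma> H \<and> (card_of H, card_of L) \<in> ordLeq)"
proof (intro allI impI)
  fix L assume "order_realizer (qclasses A \<gamma>) (r_of A \<gamma>) L"
  then have lin: "\<forall>l\<in>L. linear_order_on' (qclasses A \<gamma>) l"
    and inter: "(qclasses A \<gamma> \<times> qclasses A \<gamma>) \<inter> \<Inter>L = r_of A \<gamma>"
    unfolding order_realizer_def by blast+
  have cl: "qclass \<gamma> ` A \<subseteq> qclasses A \<gamma>"
    by (rule image_subsetI) (rule qclass_in_qclasses)
  define H where "H = (\<lambda>l. (A \<times> A) \<inter> inv_image l (qclass \<gamma>)) ` L"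
  have "half_space A ((A \<times> A) \<inter> inv_image l (qclass \<gamma>))" if "l \<in> L" for l
    using lin that by (intro linear_order_inv_image_half_space[OF _ cl]) blast
  then have half_spaces: "\<forall>\<alpha>\<in>H. half_space A \<alpha>"
    unfolding H_def by blast
  have "(A \<times> A) \<inter> \<Inter>H = (A \<times> A) \<inter> inv_image (r_of A \<gamma>) (qclass \<gamma>)"
    unfolding H_def inter[symmetric] using cl by (rule Int_Inter_inv_image)
  also have "\<dots> = \<gamma>"
    using quasiorder_eq_inv_image_r_of[OF assms] by (rule sym)
  finally have "hs_realizer A \<gamma> H"
    using half_spaces unfolding hs_realizer_def by blast
  moreover have "(card_of H, card_of L) \<in> ordLeq"
    unfolding H_def by (rule card_of_image)
  ultimately show "\<exists>H. hs_realizer A \<gamma> H \<and> (card_of H, card_of L) \<in> ordLeq" by blast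
qed

end
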